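(* Consider a repeater chain in the model described in the context with $M+N+1$ nodes labelled $1,\dots,M+N+1$ and elementary-link fidelity $F$. Suppose nodes $1,\dots,M$ are at fixed locations with fixed distances between consecutive ones, and the $N$ repeater nodes $M+1,\dots,M+N$ between nodes $M$ and $M+N+1$ are placed along a curve that can be freely chosen but whose length can be no shorter than $L_{\min}$. Let $\ell_i\ge0$ be the distance between nodes $M+i-1$ and $M+i$ for $i=1,\dots,N+1$, with $\sum_i\ell_i\ge L_{\min}$. Suppose nodes $1,\dots,M-1$ have memory coherence time $T$, while nodes $M,\dots,M+N+1$ have perfect quantum memory. Then the secret-key rate $\mathrm{SKR}$ is maximal when $\sum_i\ell_i=L_{\min}$ and $\ell_i=L_{\min}/(N+1)$ for all $i$.
   Context: Repeater-chain model (swap-ASAP, synchronized attempts). Edge $j$ connects nodes $j$ and $j+1$ and has length $l_j\ge0$ (km). Entanglement generation proceeds in synchronized rounds of duration $t_{\mathrm{att}}=\frac1c\max_jl_j$, $c=200{,}000$ km/s. In each round, each edge not yet successful attempts, succeeding independently with probability $p_j=10^{-\alpha l_j/10}$, $\alpha=0.2\ \mathrm{km}^{-1}$; the number of rounds $X_j$ until edge $j$ succeeds is geometric on $\{1,2,\dots\}$ with parameter $p_j$, independently across edges. Edge $j$ completes at time $t_j=t_{\mathrm{att}}X_j$, and the chain completes at $T_{\mathrm{done}}=t_{\mathrm{att}}\max_jX_j$; the entangling rate is $R=1/\mathbb E[T_{\mathrm{done}}]$. Each successful edge produces the two-qubit Werner state $W_{w_0}=w_0|\phi^+\rangle\langle\phi^+|+(1-w_0)\mathbb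 1/4$ with $w_0=(4F-1)/3$. Each repeater node (every node other than the two end nodes) performs entanglement swapping as soon as both of its links exist; meanwhile a stored qubit $k$ held for time $t$ in a memory with coherence time $T$ undergoes $\rho\mapsto e^{-t/T}\rho+(1-e^{-t/T})\frac{\mathbb 1_2}{2}\otimes\mathrm{Tr}_k\rho$; a node with perfect memory undergoes no such noise, and end nodes measure immediately and suffer no memory noise. Consequently, given the completion times, the end-to-end state is the Werner state with parameter $w_{e2e}=w_0^{K}\prod_{i}e^{-|t_i-t_{i-1}|/T}$, where $K$ is the number of edges and the product is over repeater nodes $i$ with imperfect memory (node $i$ sitting between edges $i-1$ and $i$); the delivered state is the Werner state with parameter $\mathbb E[w_{e2e}]$. Its quantum bit error rates are $Q_X=Q_Z=(1-\mathbb E[w_{e2e}])/2$, the secret-key fraction is $\mathrm{SKF}=\max(0,1-h(Q_X)-h(Q_Z))$ with $h(x)=-x\log_2x-(1-x)\log_2(1-x)$, and the secret-key rate is $\mathrm{SKR}=R\cdot\mathrm{SKF}$. *)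

theory Defs
  imports "HOL-Probability.Probability"
begin

text \<open>Repeater-chain model (swap-ASAP, synchronized attempts).
  A chain with K edges is given by the list ls of edge lengths (km):
  edge j (1 \<le> j \<le> K) has length ls ! (j-1) and connects nodes j and j+1.
  Nodes are labelled 1..K+1; nodes 1 and K+1 are end nodes, 2..K are repeaters.\<close>

definition light_speed :: real where "light_speed = 200000"
definition att_coeff :: real where "att_coeff = 0.2"

definition succ_prob :: "real \<Rightarrow> real" where
  "succ_prob l = 10 powr (- att_coeff * l / 10)"

text \<open>duration of one synchronized round\<close>
definition t_att :: "real list \<Rightarrow> real" where
  "t_att ls = Max (set ls) / light_speed"

text \<open>joint law of the numbers of rounds (X_1,...,X_K), independent geometrics on {1,2,...}\<close>
fun rounds_pmf :: "real list \<Rightarrow> nat list pmf" where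
  "rounds_pmf [] = return_pmf []"
| "rounds_pmf (l # ls) =
     bind_pmf (geometric_pmf (succ_prob l)) (\<lambda>x.
     bind_pmf (rounds_pmf ls) (\<lambda>xs. return_pmf (Suc x # xs)))"

definition ent_rate :: "real list \<Rightarrow> real" where
  "ent_rate ls = 1 / measure_pmf.expectation (rounds_pmf ls)
                       (\<lambda>xs. t_att ls * real (Max (set xs)))"

definition werner_param :: "real \<Rightarrow> real" where
  "werner_param F = (4 * F - 1) / 3"

text \<open>end-to-end Werner parameter given the rounds xs; Imp is the set of node labels
  whose memory is imperfect with coherence time T (all other nodes perfect).
  Completion time of edge j is t_j = t_att * X_j, with X_j = xs ! (j-1).\<close>
definition w_e2e :: "real list \<Rightarrow> real \<Rightarrow> real \<Rightarrow> nat set \<Rightarrow> nat list \<Rightarrow> real" where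
  "w_e2e ls F T Imp xs =
     werner_param F ^ length ls *
     (\<Prod>i \<in> {i \<in> {2..length ls}. i \<in> Imp}.
        exp (- \<bar>t_att ls * real (xs ! (i - 1)) - t_att ls * real (xs ! (i - 2))\<bar> / T))"

definition exp_w :: "real list \<Rightarrow> real \<Rightarrow> real \<Rightarrow> nat set \<Rightarrow> real" where
  "exp_w ls F T Imp = measure_pmf.expectation (rounds_pmf ls) (w_e2e ls F T Imp)"

definition bin_entropy :: "real \<Rightarrow> real" where
  "bin_entropy x = - x * log 2 x - (1 - x) * log 2 (1 - x)"

definition SKF :: "real list \<Rightarrow> real \<Rightarrow> real \<Rightarrow> nat set \<Rightarrow> real" where
  "SKF ls F T Imp =
     (let Q = (1 - exp_w ls F T Imp) / 2 in max 0 (1 - bin_entropy Q - bin_entropy Q))"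

definition SKR :: "real list \<Rightarrow> real \<Rightarrow> real \<Rightarrow> nat set \<Rightarrow> real" where
  "SKR ls F T Imp = ent_rate ls * SKF ls F T Imp"

text \<open>chain of M+N+1 nodes: fixed edges d 1..d (M-1) between nodes 1..M,
  then the free edges l 1..l (N+1) between nodes M..M+N+1\<close>
definition chain_lengths :: "nat \<Rightarrow> nat \<Rightarrow> (nat \<Rightarrow> real) \<Rightarrow> (nat \<Rightarrow> real) \<Rightarrow> real list" where
  "chain_lengths M N d l = map d [1..<M] @ map l [1..<N+2]"

end

theory Submission
  imports Defs "HOL-Probability.Product_PMF"
begin

text \<open>The entangling rate and the secret-key fraction improve separately.
  For the rate, E[max_j X_j] = sum_n (1 - prod_j P(X_j \<le> n)), and each factor
  P(X \<le> n) = 1 - (1 - exp(-c l))^n is log-concave in the edge length l; by Jensen's inequality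
  the product over the free edges, subject to sum_i l_i \<ge> Lmin, is largest at l_i = Lmin/(N+1),
  and the round duration, set by the longest edge, can only shrink.
  For the fidelity, the imperfect memories sit at nodes 2..M-1, so their decay factors only
  involve the round counts of the fixed edges, whose law is the same in both chains, and each
  factor exp(-t_att |X_i - X_(i-1)| / T) grows as t_att shrinks. Finally the binary entropy
  increases on [0, 1/2], so the larger Werner parameter gives the larger secret-key fraction.\<close>

definition loss_rate :: real where
  "loss_rate = att_coeff * ln 10 / 10"

lemma loss_rate_pos: "0 < loss_rate"
  by (simp add: loss_rate_def att_coeff_def)

lemma succ_prob_eq_exp: "succ_prob l = exp (- loss_rate * l)"
  by (simp add: succ_prob_def powr_def loss_rate_def)

lemma succ_prob_pos: "0 < succ_prob l"
  by (simp add: succ_prob_eq_exp)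

lemma succ_prob_le_1: "0 \<le> l \<Longrightarrow> succ_prob l \<le> 1"
  using loss_rate_pos by (simp add: succ_prob_eq_exp)

definition edge_cdf :: "nat \<Rightarrow> real \<Rightarrow> real" where
  "edge_cdf n l = 1 - (1 - succ_prob l) ^ n"

lemma edge_cdf_eq: "edge_cdf n l = 1 - (1 - exp (- loss_rate * l)) ^ n"
  by (simp add: edge_cdf_def succ_prob_eq_exp)

lemma edge_cdf_nonneg: "0 \<le> l \<Longrightarrow> 0 \<le> edge_cdf n l"
  unfolding edge_cdf_def using succ_prob_pos succ_prob_le_1
  by (simp add: power_le_one less_imp_le)

lemma edge_cdf_pos: "0 \<le> l \<Longrightarrow> 1 \<le> n \<Longrightarrow> 0 < edge_cdf n l"
  unfolding edge_cdf_def using succ_prob_pos succ_prob_le_1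
  by (simp add: power_less_one_iff)

lemma edge_cdf_antimono: "0 \<le> x \<Longrightarrow> x \<le> y \<Longrightarrow> edge_cdf n y \<le> edge_cdf n x"
  unfolding edge_cdf_eq using loss_rate_pos
  by (auto intro!: power_mono simp: mult_left_mono)

lemma measure_geometric_pmf_lessThan:
  assumes "0 < p" "p \<le> 1"
  shows "measure_pmf.prob (geometric_pmf p) {..<n} = 1 - (1 - p) ^ n"
proof -
  have "measure_pmf.prob (geometric_pmf p) {..<n} = (\<Sum>k<n. (1 - p) ^ k) * p"
    using assms by (simp add: measure_measure_pmf_finite sum_distrib_right)
  also have "\<dots> = 1 - (1 - p) ^ n"
    using assms by (simp add: sum_gp_strict)
  finally show ?thesis .
qed

lemma rounds_pmf_Cons:
  "rounds_pmf (l # ls) =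
     map_pmf (\<lambda>(x, xs). Suc x # xs) (pair_pmf (geometric_pmf (succ_prob l)) (rounds_pmf ls))"
  by (simp add: pair_pmf_def map_bind_pmf)

lemma measure_rounds_pmf_all_le:
  assumes "\<forall>l\<in>set ls. 0 \<le> l"
  shows "measure_pmf.prob (rounds_pmf ls) {xs. \<forall>x\<in>set xs. x \<le> n} = (\<Prod>l\<leftarrow>ls. edge_cdf n l)"
  using assms
proof (induction ls)
  case (Cons l ls)
  let ?C = "{xs. \<forall>x\<in>set xs. x \<le> n}"
  have "(\<lambda>(x, xs). Suc x # xs) -` ?C = {..<n} \<times> ?C"
    by auto
  then have "measure_pmf.prob (rounds_pmf (l # ls)) ?C
      = measure_pmf.prob (geometric_pmf (succ_prob l)) {..<n} * measure_pmf.prob (rounds_pmf ls) ?C"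
    by (simp only: rounds_pmf_Cons measure_map_pmf measure_pmf_prob_product countable_finite
        finite_lessThan countableI_type)
  then show ?case
    using Cons succ_prob_pos succ_prob_le_1
    by (simp add: measure_geometric_pmf_lessThan edge_cdf_def)
qed simp

lemma power_div_geometric_sum_mono:
  fixes v w :: real
  assumes "0 \<le> v" "v \<le> w"
  shows "v ^ (n - 1) / (\<Sum>k<n. v ^ k) \<le> w ^ (n - 1) / (\<Sum>k<n. w ^ k)"
proof (cases "n = 0")
  case False
  have sums_pos: "0 < (\<Sum>k<n. v ^ k)" "0 < (\<Sum>k<n. w ^ k)"
    using False assms by (auto intro!: sum_pos2[of _ 0])
  have "v ^ (n - 1) * (\<Sum>k<n. w ^ k) \<le> w ^ (n - 1) * (\<Sum>k<n. v ^ k)"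
    unfolding sum_distrib_left
  proof (intro sum_mono)
    fix k assume k: "k \<in> {..<n}"
    have "v ^ (n - 1) * w ^ k = v ^ k * (v ^ (n - 1 - k) * w ^ k)"
      using k by (simp add: power_add[symmetric] mult.assoc)
    also have "\<dots> \<le> v ^ k * (w ^ (n - 1 - k) * w ^ k)"
      using assms by (intro mult_left_mono mult_right_mono power_mono) auto
    also have "\<dots> = w ^ (n - 1) * v ^ k"
      using k by (simp add: power_add[symmetric] mult.commute)
    finally show "v ^ (n - 1) * w ^ k \<le> w ^ (n - 1) * v ^ k" .
  qed
  then show ?thesis
    using sums_pos by (simp add: divide_simps mult.commute)
qed simp

lemma has_real_derivative_neg_ln_geometric_cdf:
  fixes c y :: real
  assumes "0 \<le> c" "0 \<le> y" "1 \<le> n"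
  defines "v \<equiv> 1 - exp (- c * y)"
  shows "((\<lambda>y. - ln (1 - (1 - exp (- c * y)) ^ n)) has_real_derivative
           c * real n * v ^ (n - 1) / (\<Sum>k<n. v ^ k)) (at y)"
proof -
  define S where "S = (\<Sum>k<n. v ^ k)"
  have v: "0 \<le> v" "v < 1"
    using assms by (auto simp: v_def)
  have S_pos: "0 < S"
    using assms v by (auto simp: S_def intro!: sum_pos2[of _ 0])
  have factor: "1 - v ^ n = exp (- c * y) * S"
    using one_diff_power_eq[of v n] by (simp add: S_def v_def)
  have "((\<lambda>y. - ln (1 - (1 - exp (- c * y)) ^ n)) has_real_derivative
      real n * v ^ (n - 1) * (exp (- c * y) * c) / (1 - v ^ n)) (at y)"
    using v assms(3) by (auto intro!: derivative_eq_intros simp: v_def power_less_one_iff)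
  moreover have "real n * v ^ (n - 1) * (exp (- c * y) * c) / (1 - v ^ n) = c * real n * v ^ (n - 1) / S"
    unfolding factor using S_pos by (simp add: field_simps)
  ultimately show ?thesis
    by (simp add: S_def)
qed

lemma convex_on_neg_ln_geometric_cdf:
  fixes c :: real
  assumes "0 \<le> c" "1 \<le> n"
  shows "convex_on {0..} (\<lambda>y. - ln (1 - (1 - exp (- c * y)) ^ n))"
proof (rule convex_on_realI)
  fix x y :: real
  assume "x \<in> {0..}" "y \<in> {0..}" "x \<le> y"
  then have "(1 - exp (- c * x)) ^ (n - 1) / (\<Sum>k<n. (1 - exp (- c * x)) ^ k)
      \<le> (1 - exp (- c * y)) ^ (n - 1) / (\<Sum>k<n. (1 - exp (- c * y)) ^ k)"
    using assms by (intro power_div_geometric_sum_mono) (auto simp: mult_left_mono)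
  then show "c * real n * (1 - exp (- c * x)) ^ (n - 1) / (\<Sum>k<n. (1 - exp (- c * x)) ^ k)
      \<le> c * real n * (1 - exp (- c * y)) ^ (n - 1) / (\<Sum>k<n. (1 - exp (- c * y)) ^ k)"
    using assms by (simp add: mult_left_mono times_divide_eq_right[symmetric] del: times_divide_eq_right)
qed (use assms has_real_derivative_neg_ln_geometric_cdf in auto)

lemma prod_le_power_card_if_log_concave:
  fixes f :: "real \<Rightarrow> real" and l :: "'a \<Rightarrow> real"
  assumes convex: "convex_on {0..} (\<lambda>y. - ln (f y))"
    and pos: "\<And>y. 0 \<le> y \<Longrightarrow> 0 < f y"
    and antimono: "\<And>x y. 0 \<le> x \<Longrightarrow> x \<le> y \<Longrightarrow> f y \<le> f x"
    and I: "finite I" "I \<noteq> {}"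
    and l: "\<And>i. i \<in> I \<Longrightarrow> 0 \<le> l i"
    and L: "0 \<le> L" "L \<le> (\<Sum>i\<in>I. l i)"
  shows "(\<Prod>i\<in>I. f (l i)) \<le> f (L / card I) ^ card I"
proof -
  define k where "k = real (card I)"
  define mean where "mean = (\<Sum>i\<in>I. l i) / k"
  have k: "0 < k"
    using I by (simp add: k_def card_gt_0_iff)
  have mean: "mean = (\<Sum>i\<in>I. (1 / k) *\<^sub>R l i)"
    by (simp add: mean_def sum_divide_distrib)
  have "- ln (f mean) \<le> (\<Sum>i\<in>I. (1 / k) * - ln (f (l i)))"
    unfolding mean using I l k
    by (intro convex_on_sum[OF _ _ convex]) (auto simp: k_def)
  then have jensen: "(\<Sum>i\<in>I. ln (f (l i))) \<le> k * ln (f mean)"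
    using k by (simp add: sum_negf sum_divide_distrib[symmetric] field_simps)
  have "f mean \<le> f (L / k)"
    using L k by (intro antimono) (auto simp: mean_def divide_right_mono)
  then have "ln (f mean) \<le> ln (f (L / k))"
    using L k l pos by (simp add: mean_def sum_nonneg)
  with jensen k have "(\<Sum>i\<in>I. ln (f (l i))) \<le> k * ln (f (L / k))"
    by (meson mult_left_mono order_trans less_imp_le)
  moreover have "ln (\<Prod>i\<in>I. f (l i)) = (\<Sum>i\<in>I. ln (f (l i)))"
    using I l pos by (intro ln_prod) (auto simp: less_imp_neq[symmetric])
  ultimately have "ln (\<Prod>i\<in>I. f (l i)) \<le> ln (f (L / k) ^ card I)"
    using L k pos by (simp add: ln_realpow k_def)
  then show ?thesis
    using l pos L k by (simp add: prod_pos k_def)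
qed

lemma prod_edge_cdf_le_uniform:
  assumes "finite I" "I \<noteq> {}" "\<And>i. i \<in> I \<Longrightarrow> 0 \<le> l i" "0 \<le> L" "L \<le> (\<Sum>i\<in>I. l i)"
  shows "(\<Prod>i\<in>I. edge_cdf n (l i)) \<le> edge_cdf n (L / card I) ^ card I"
proof (cases "n = 0")
  case True
  then show ?thesis
    using assms by (simp add: edge_cdf_def)
next
  case False
  show ?thesis
  proof (rule prod_le_power_card_if_log_concave[OF _ edge_cdf_pos _ assms])
    show "convex_on {0..} (\<lambda>y. - ln (edge_cdf n y))"
      unfolding edge_cdf_eq using False loss_rate_pos
      by (intro convex_on_neg_ln_geometric_cdf) auto
  qed (use False in \<open>auto intro: edge_cdf_antimono\<close>)
qed

lemma exists_ge_average:
  fixes l :: "'a \<Rightarrow> real"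
  assumes "finite I" "I \<noteq> {}" "L \<le> (\<Sum>i\<in>I. l i)"
  shows "\<exists>i\<in>I. L / card I \<le> l i"
proof (rule ccontr)
  assume "\<not> ?thesis"
  then have "(\<Sum>i\<in>I. l i) < (\<Sum>i\<in>I. L / card I)"
    using assms by (intro sum_strict_mono) auto
  with assms show False
    by simp
qed

lemma set_pmf_rounds_pmf:
  "xs \<in> set_pmf (rounds_pmf ls) \<Longrightarrow> length xs = length ls \<and> (\<forall>x\<in>set xs. 1 \<le> x)"
  by (induction ls arbitrary: xs) auto

lemma ennreal_Max_eq_suminf_indicator:
  assumes "xs \<noteq> []"
  shows "ennreal (real (Max (set xs))) = (\<Sum>n. indicator {xs. \<exists>x\<in>set xs. n < x} xs)"
proof -
  have "(\<lambda>n. indicator {xs. \<exists>x\<in>set xs. n < x} xs :: ennreal) = indicator {..<Max (set xs)}"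
    using assms by (auto simp: indicator_def Max_gr_iff)
  moreover have "(\<Sum>n. indicator {..<Max (set xs)} n :: ennreal) = of_nat (Max (set xs))"
    by (simp add: nn_integral_count_space_nat[symmetric])
  ultimately show ?thesis
    by (simp add: ennreal_of_nat_eq_real_of_nat)
qed

lemma nn_integral_Max_eq_suminf:
  fixes p :: "nat list pmf"
  assumes "\<And>xs. xs \<in> set_pmf p \<Longrightarrow> xs \<noteq> []"
  shows "(\<integral>\<^sup>+xs. ennreal (real (Max (set xs))) \<partial>p)
       = (\<Sum>n. emeasure p {xs. \<exists>x\<in>set xs. n < x})"
proof -
  have "(\<integral>\<^sup>+xs. ennreal (real (Max (set xs))) \<partial>p)
      = (\<integral>\<^sup>+xs. (\<Sum>n. indicator {xs. \<exists>x\<in>set xs. n < x} xs) \<partial>p)"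
    using assms by (intro nn_integral_cong_AE AE_pmfI ennreal_Max_eq_suminf_indicator)
  also have "\<dots> = (\<Sum>n. emeasure p {xs. \<exists>x\<in>set xs. n < x})"
    by (subst nn_integral_suminf) simp_all
  finally show ?thesis .
qed

lemma measure_rounds_pmf_exists_gt:
  assumes "\<forall>l\<in>set ls. 0 \<le> l"
  shows "measure_pmf.prob (rounds_pmf ls) {xs. \<exists>x\<in>set xs. n < x} = 1 - (\<Prod>l\<leftarrow>ls. edge_cdf n l)"
proof -
  have "{xs. \<exists>x\<in>set xs. n < x} = UNIV - {xs. \<forall>x\<in>set xs. x \<le> n}"
    by (auto simp: not_le)
  then show ?thesis
    using measure_pmf.prob_compl[of "{xs. \<forall>x\<in>set xs. x \<le> n}" "rounds_pmf ls"]
    by (simp add: measure_rounds_pmf_all_le[OF assms])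
qed

lemma ent_rate_mono:
  assumes "ls1 \<noteq> []" "ls2 \<noteq> []" "\<forall>l\<in>set ls1. 0 \<le> l" "\<forall>l\<in>set ls2. 0 \<le> l"
    and cdf: "\<And>n. (\<Prod>l\<leftarrow>ls1. edge_cdf n l) \<le> (\<Prod>l\<leftarrow>ls2. edge_cdf n l)"
    and t: "0 < t_att ls2" "t_att ls2 \<le> t_att ls1"
  shows "ent_rate ls1 \<le> ent_rate ls2"
proof -
  define f :: "nat list \<Rightarrow> real" where "f = (\<lambda>xs. real (Max (set xs)))"
  define E1 where "E1 = measure_pmf.expectation (rounds_pmf ls1) f"
  define E2 where "E2 = measure_pmf.expectation (rounds_pmf ls2) f"
  have rates: "ent_rate ls1 = 1 / (t_att ls1 * E1)" "ent_rate ls2 = 1 / (t_att ls2 * E2)"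
    by (simp_all add: ent_rate_def E1_def E2_def f_def)
  have nonempty: "\<And>ls xs. ls \<noteq> [] \<Longrightarrow> xs \<in> set_pmf (rounds_pmf ls) \<Longrightarrow> xs \<noteq> []"
    using set_pmf_rounds_pmf by fastforce
  have nn_le: "(\<integral>\<^sup>+xs. f xs \<partial>rounds_pmf ls2) \<le> (\<integral>\<^sup>+xs. f xs \<partial>rounds_pmf ls1)"
    unfolding f_def using assms nonempty
    by (simp add: nn_integral_Max_eq_suminf measure_pmf.emeasure_eq_measure
        measure_rounds_pmf_exists_gt suminf_le ennreal_leI)
  show ?thesis
  proof (cases "integrable (rounds_pmf ls1) f")
    case False
    \<comment> \<open>an infinite E[max X] makes the Bochner integral 0, hence ent_rate ls1 = 1/0 = 0\<close>
    then have "E1 = 0"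
      by (simp add: E1_def not_integrable_integral_eq)
    then show ?thesis
      using rates t by (simp add: E2_def f_def)
  next
    case True
    have nn1: "(\<integral>\<^sup>+xs. f xs \<partial>rounds_pmf ls1) = E1"
      using True by (simp add: E1_def f_def nn_integral_eq_integral)
    have integrable2: "integrable (rounds_pmf ls2) f"
      using nn_le nn1 by (intro integrableI_nonneg) (auto simp: f_def top.not_eq_extremum le_less_trans)
    then have nn2: "(\<integral>\<^sup>+xs. f xs \<partial>rounds_pmf ls2) = E2"
      by (simp add: E2_def f_def nn_integral_eq_integral)
    have "E2 \<le> E1"
      using nn_le nn1 nn2 by (simp add: E1_def f_def)
    moreover have "1 \<le> E2"
      unfolding E2_def
    proof (intro measure_pmf.integral_ge_const integrable2 AE_pmfI)
      fix xs assume xs: "xs \<in> set_pmf (rounds_pmf ls2)"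
      then obtain x where "x \<in> set xs" "1 \<le> x"
        using set_pmf_rounds_pmf[OF xs] nonempty[OF assms(2) xs] by (cases xs) auto
      then have "1 \<le> Max (set xs)"
        by (meson List.finite_set Max_ge order_trans)
      then show "1 \<le> f xs"
        by (simp add: f_def)
    qed
    ultimately show ?thesis
      using t unfolding rates by (intro divide_left_mono mult_mono) auto
  qed
qed

definition memory_decay :: "real \<Rightarrow> real \<Rightarrow> nat set \<Rightarrow> nat list \<Rightarrow> real" where
  "memory_decay t T S xs =
     (\<Prod>i\<in>S. exp (- \<bar>t * real (xs ! (i - 1)) - t * real (xs ! (i - 2))\<bar> / T))"

lemma w_e2e_eq_memory_decay:
  "w_e2e ls F T Imp =
     (\<lambda>xs. werner_param F ^ length ls * memory_decay (t_att ls) T {i \<in> {2..length ls}. i \<in> Imp} xs)"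
  by (simp add: fun_eq_iff w_e2e_def memory_decay_def)

lemma memory_decay_nonneg: "0 \<le> memory_decay t T S xs"
  by (simp add: memory_decay_def prod_nonneg)

lemma memory_decay_le_1: "0 \<le> T \<Longrightarrow> memory_decay t T S xs \<le> 1"
  by (simp add: memory_decay_def prod_le_1)

lemma memory_decay_antimono:
  assumes "0 \<le> T" "0 \<le> t2" "t2 \<le> t1"
  shows "memory_decay t1 T S xs \<le> memory_decay t2 T S xs"
  unfolding memory_decay_def
proof (intro prod_mono conjI)
  fix i
  let ?d = "\<bar>real (xs ! (i - 1)) - real (xs ! (i - 2))\<bar>"
  have "\<bar>t * real (xs ! (i - 1)) - t * real (xs ! (i - 2))\<bar> = t * ?d" if "0 \<le> t" for t
    using that by (simp add: right_diff_distrib[symmetric] abs_mult)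
  moreover have "t2 * ?d \<le> t1 * ?d"
    using assms by (intro mult_right_mono) auto
  ultimately show "exp (- \<bar>t1 * real (xs ! (i - 1)) - t1 * real (xs ! (i - 2))\<bar> / T)
      \<le> exp (- \<bar>t2 * real (xs ! (i - 1)) - t2 * real (xs ! (i - 2))\<bar> / T)"
    using assms by (simp add: divide_right_mono)
qed simp

lemma memory_decay_take:
  assumes "S \<subseteq> {1..m}"
  shows "memory_decay t T S (take m xs) = memory_decay t T S xs"
  unfolding memory_decay_def
proof (intro prod.cong refl)
  fix i assume "i \<in> S"
  then have "i \<in> {1..m}"
    using assms by blast
  then have "i - 1 < m" "i - 2 < m"
    by auto
  then show "exp (- \<bar>t * real (take m xs ! (i - 1)) - t * real (take m xs ! (i - 2))\<bar> / T)
      = exp (- \<bar>t * real (xs ! (i - 1)) - t * real (xs ! (i - 2))\<bar> / T)"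
    by simp
qed

lemma map_pmf_take_rounds_pmf_append:
  "map_pmf (take (length A)) (rounds_pmf (A @ B)) = rounds_pmf A"
proof (induction A)
  case (Cons a A)
  have "map_pmf (take (length (a # A))) (rounds_pmf ((a # A) @ B))
      = map_pmf (\<lambda>(x, xs). Suc x # xs)
          (pair_pmf (geometric_pmf (succ_prob a)) (map_pmf (take (length A)) (rounds_pmf (A @ B))))"
    by (simp only: append_Cons rounds_pmf_Cons map_pmf_comp pair_map_pmf2 length_Cons)
      (simp add: case_prod_beta o_def)
  then show ?case
    by (simp only: Cons.IH rounds_pmf_Cons)
qed (simp add: map_pmf_def bind_return_pmf')

lemma expectation_memory_decay_append:
  assumes "S \<subseteq> {1..length A}"
  shows "measure_pmf.expectation (rounds_pmf (A @ B)) (memory_decay t T S)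
       = measure_pmf.expectation (rounds_pmf A) (memory_decay t T S)"
proof -
  have "measure_pmf.expectation (rounds_pmf (A @ B)) (memory_decay t T S)
      = measure_pmf.expectation (map_pmf (take (length A)) (rounds_pmf (A @ B))) (memory_decay t T S)"
    using memory_decay_take[OF assms] by simp
  then show ?thesis
    by (simp only: map_pmf_take_rounds_pmf_append)
qed

lemma exp_w_eq:
  "exp_w ls F T Imp = werner_param F ^ length ls *
     measure_pmf.expectation (rounds_pmf ls) (memory_decay (t_att ls) T {i \<in> {2..length ls}. i \<in> Imp})"
  by (simp add: exp_w_def w_e2e_eq_memory_decay)

lemma exp_w_bounds:
  assumes "0 \<le> werner_param F" "werner_param F \<le> 1" "0 \<le> T"
  shows "0 \<le> exp_w ls F T Imp" "exp_w ls F T Imp \<le> 1"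
proof -
  define E where "E = measure_pmf.expectation (rounds_pmf ls) (memory_decay (t_att ls) T {i \<in> {2..length ls}. i \<in> Imp})"
  have "0 \<le> E" "E \<le> 1"
    unfolding E_def using assms
    by (auto intro!: integral_nonneg_AE measure_pmf.integral_le_const AE_pmfI
        measure_pmf.integrable_const_bound[where B=1] memory_decay_nonneg memory_decay_le_1
        simp: memory_decay_nonneg)
  moreover have "werner_param F ^ length ls \<le> 1"
    using assms by (simp add: power_le_one)
  ultimately show "0 \<le> exp_w ls F T Imp" "exp_w ls F T Imp \<le> 1"
    unfolding exp_w_eq E_def[symmetric] using assms by (simp_all add: mult_le_one)
qed

lemma exp_w_mono:
  assumes "length B1 = length B2" "Imp \<subseteq> {1..length A}"
    and "0 \<le> werner_param F" "0 \<le> T"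
    and "0 \<le> t_att (A @ B2)" "t_att (A @ B2) \<le> t_att (A @ B1)"
  shows "exp_w (A @ B1) F T Imp \<le> exp_w (A @ B2) F T Imp"
proof -
  define K where "K = length (A @ B1)"
  define S where "S = {i \<in> {2..K}. i \<in> Imp}"
  have K: "length (A @ B2) = K"
    using assms by (simp add: K_def)
  have S: "S \<subseteq> {1..length A}"
    using assms by (auto simp: S_def)
  have "measure_pmf.expectation (rounds_pmf (A @ B1)) (memory_decay (t_att (A @ B1)) T S)
      \<le> measure_pmf.expectation (rounds_pmf (A @ B1)) (memory_decay (t_att (A @ B2)) T S)"
    using assms
    by (intro integral_mono measure_pmf.integrable_const_bound[where B=1] AE_pmfI
        memory_decay_antimono) (auto simp: memory_decay_nonneg memory_decay_le_1)
  also have "\<dots> = measure_pmf.expectation (rounds_pmf (A @ B2)) (memory_decay (t_att (A @ B2)) T S)"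
    by (simp only: expectation_memory_decay_append[OF S])
  finally have E: "measure_pmf.expectation (rounds_pmf (A @ B1)) (memory_decay (t_att (A @ B1)) T S)
      \<le> measure_pmf.expectation (rounds_pmf (A @ B2)) (memory_decay (t_att (A @ B2)) T S)" .
  show ?thesis
    unfolding exp_w_eq K K_def[symmetric] S_def[symmetric]
    by (rule mult_left_mono[OF E]) (use assms in simp)
qed

lemma has_real_derivative_bin_entropy:
  assumes "0 < x" "x < 1"
  shows "(bin_entropy has_real_derivative log 2 (1 - x) - log 2 x) (at x)"
proof -
  have "((\<lambda>x. - x * log 2 x - (1 - x) * log 2 (1 - x)) has_real_derivative
      - (log 2 x + x * inverse (ln 2 * x)) - (- log 2 (1 - x) - (1 - x) * inverse (ln 2 * (1 - x))))
      (at x)"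
    using assms by (auto intro!: derivative_eq_intros)
  moreover have "- (log 2 x + x * inverse (ln 2 * x)) - (- log 2 (1 - x) - (1 - x) * inverse (ln 2 * (1 - x)))
      = log 2 (1 - x) - log 2 x"
    using assms by (simp add: field_simps)
  ultimately show ?thesis
    unfolding bin_entropy_def[abs_def] by (rule DERIV_cong)
qed

lemma bin_entropy_nonneg:
  assumes "0 \<le> x" "x \<le> 1"
  shows "0 \<le> bin_entropy x"
proof -
  have "y * log 2 y \<le> 0" if "0 \<le> y" "y \<le> 1" for y :: real
    using that by (cases "y = 0") (auto intro: mult_nonneg_nonpos)
  from this[of x] this[of "1 - x"] show ?thesis
    using assms by (simp add: bin_entropy_def)
qed

lemma bin_entropy_mono:
  assumes "0 \<le> a" "a \<le> b" "b \<le> 1 / 2"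
  shows "bin_entropy a \<le> bin_entropy b"
proof (cases "a = 0")
  case True
  then show ?thesis
    using bin_entropy_nonneg[of b] assms by (simp add: bin_entropy_def)
next
  case False
  then have deriv: "(bin_entropy has_real_derivative log 2 (1 - x) - log 2 x) (at x)" if "x \<in> {a..b}" for x
    using that assms by (intro has_real_derivative_bin_entropy) auto
  show ?thesis
  proof (rule DERIV_nonneg_imp_increasing_open[OF assms(2)])
    fix x assume "a < x" "x < b"
    then show "\<exists>y. (bin_entropy has_real_derivative y) (at x) \<and> 0 \<le> y"
      using deriv assms by (intro exI[of _ "log 2 (1 - x) - log 2 x"]) auto
  next
    show "continuous_on {a..b} bin_entropy"
    proof (rule DERIV_continuous_on)
      fix x assume "x \<in> {a..b}"
      then show "(bin_entropy has_field_derivative log 2 (1 - x) - log 2 x) (at x within {a..b})"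
        using deriv has_field_derivative_at_within by blast
    qed
  qed
qed

lemma SKF_mono:
  assumes "0 \<le> exp_w ls1 F T Imp" "exp_w ls1 F T Imp \<le> exp_w ls2 F T Imp" "exp_w ls2 F T Imp \<le> 1"
  shows "SKF ls1 F T Imp \<le> SKF ls2 F T Imp"
proof -
  have "bin_entropy ((1 - exp_w ls2 F T Imp) / 2) \<le> bin_entropy ((1 - exp_w ls1 F T Imp) / 2)"
    using assms by (intro bin_entropy_mono) auto
  then show ?thesis
    by (simp add: SKF_def Let_def)
qed

lemma chain_lengths_uniform:
  "chain_lengths M N d (\<lambda>_. u) = map d [1..<M] @ replicate (N + 1) u"
  by (simp add: chain_lengths_def map_replicate_const)

lemma prod_list_upt_eq_prod: "(\<Prod>i\<leftarrow>[1..<N + 2]. f i) = (\<Prod>i = 1..N + 1. f i)"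
proof -
  have "set [1..<N + 2] = {1..N + 1}"
    by auto
  then show ?thesis
    by (metis distinct_upt prod.distinct_set_conv_list)
qed

lemma prod_edge_cdf_chain_le:
  assumes "\<forall>i\<in>{1..<M}. 0 \<le> d i" "\<forall>i\<in>{1..N+1}. 0 \<le> l i"
    and "0 \<le> L" "L \<le> (\<Sum>i = 1..N + 1. l i)"
  shows "(\<Prod>x\<leftarrow>chain_lengths M N d l. edge_cdf n x)
       \<le> (\<Prod>x\<leftarrow>chain_lengths M N d (\<lambda>_. L / real (N + 1)). edge_cdf n x)"
proof -
  have "(\<Prod>i = 1..N + 1. edge_cdf n (l i)) \<le> edge_cdf n (L / real (N + 1)) ^ (N + 1)"
    using prod_edge_cdf_le_uniform[of "{1..N+1}" l L n] assms by simp
  moreover have "0 \<le> (\<Prod>x\<leftarrow>map d [1..<M]. edge_cdf n x)"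
    using assms by (auto intro!: prod_list_nonneg edge_cdf_nonneg)
  ultimately show ?thesis
    unfolding chain_lengths_uniform
    unfolding chain_lengths_def map_append prod_list.append map_map o_def prod_list_upt_eq_prod
      map_replicate prod_list_replicate
    by (rule mult_left_mono)
qed

lemma t_att_chain_le:
  assumes "L \<le> (\<Sum>i = 1..N + 1. l i)"
  shows "t_att (chain_lengths M N d (\<lambda>_. L / real (N + 1))) \<le> t_att (chain_lengths M N d l)"
proof -
  define u where "u = L / real (N + 1)"
  define ls where "ls = chain_lengths M N d l"
  obtain j where j: "j \<in> {1..N+1}" "u \<le> l j"
    using exists_ge_average[of "{1..N+1}" L l] assms by (auto simp: u_def)
  then have "j \<in> set [1..<N + 2]"
    by auto
  then have "l j \<in> set ls"
    unfolding ls_def chain_lengths_def set_append set_map by (intro UnI2 imageI)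
  then have u_le: "u \<le> Max (set ls)"
    using j(2) by (meson List.finite_set Max_ge order_trans)
  have d_le: "x \<le> Max (set ls)" if "x \<in> set (map d [1..<M])" for x
  proof -
    have "x \<in> set ls"
      unfolding ls_def chain_lengths_def set_append using that by (rule UnI1)
    then show ?thesis
      by (intro Max_ge) auto
  qed
  have "Max (set (chain_lengths M N d (\<lambda>_. u))) \<le> Max (set ls)"
    using u_le d_le by (subst Max_le_iff) (auto simp: chain_lengths_uniform)
  then show ?thesis
    by (simp add: t_att_def light_speed_def u_def ls_def divide_right_mono)
qed

lemma chain_lengths_nonneg:
  assumes "\<forall>i\<in>{1..<M}. 0 \<le> d i" "\<forall>i\<in>{1..N+1}. 0 \<le> l i"
  shows "\<forall>x\<in>set (chain_lengths M N d l). 0 \<le> x"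
  using assms by (auto simp: chain_lengths_def simp del: upt_Suc)

lemma chain_lengths_ne_Nil: "chain_lengths M N d l \<noteq> []"
  by (simp add: chain_lengths_def)

lemma t_att_pos:
  assumes "x \<in> set ls" "0 < x"
  shows "0 < t_att ls"
proof -
  have "x \<le> Max (set ls)"
    using assms(1) by simp
  then show ?thesis
    using assms(2) by (simp add: t_att_def light_speed_def)
qed

lemma ent_rate_nonneg: "0 \<le> t_att ls \<Longrightarrow> 0 \<le> ent_rate ls"
  by (simp add: ent_rate_def integral_nonneg_AE)

theorem mainTheorem8:
  fixes M N :: nat and d l :: "nat \<Rightarrow> real" and F T Lmin :: real
  assumes "M \<ge> 1"
    and "\<forall>i\<in>{1..<M}. d i \<ge> 0"
    and "1/4 \<le> F" and "F \<le> 1"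
    and "T > 0"
    and "Lmin > 0"
    and "\<forall>i\<in>{1..N+1}. l i \<ge> 0"
    and "(\<Sum>i=1..N+1. l i) \<ge> Lmin"
  shows "SKR (chain_lengths M N d l) F T {1..M-1}
         \<le> SKR (chain_lengths M N d (\<lambda>_. Lmin / real (N+1))) F T {1..M-1}"
proof -
  define u where "u = Lmin / real (N + 1)"
  define A where "A = map d [1..<M]"
  define ls1 where "ls1 = chain_lengths M N d l"
  define ls2 where "ls2 = chain_lengths M N d (\<lambda>_. u)"
  have u: "0 < u" "u \<in> set ls2"
    using assms(6) by (simp_all add: u_def ls2_def chain_lengths_uniform)
  have t_att: "0 < t_att ls2" "t_att ls2 \<le> t_att ls1"
    using t_att_pos[OF u(2) u(1)] t_att_chain_le[OF assms(8)] by (simp_all add: ls1_def ls2_def u_def)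
  have "ent_rate ls1 \<le> ent_rate ls2"
    using assms t_att unfolding ls1_def ls2_def u_def
    by (intro ent_rate_mono chain_lengths_ne_Nil chain_lengths_nonneg prod_edge_cdf_chain_le) auto
  moreover have "0 \<le> ent_rate ls2"
    using t_att by (simp add: ent_rate_nonneg)
  moreover have werner: "0 \<le> werner_param F" "werner_param F \<le> 1"
    using assms(3,4) by (simp_all add: werner_param_def)
  have "exp_w (A @ map l [1..<N + 2]) F T {1..M-1} \<le> exp_w (A @ replicate (N + 1) u) F T {1..M-1}"
    using t_att werner assms(5) unfolding ls1_def ls2_def chain_lengths_uniform
    by (intro exp_w_mono) (auto simp: A_def chain_lengths_def)
  then have "SKF ls1 F T {1..M-1} \<le> SKF ls2 F T {1..M-1}"
    using werner assms(5) unfolding ls1_def ls2_def chain_lengths_uniform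
    by (intro SKF_mono exp_w_bounds) (simp_all add: A_def chain_lengths_def)
  moreover have "0 \<le> SKF ls1 F T {1..M-1}"
    by (simp add: SKF_def Let_def)
  ultimately show ?thesis
    unfolding SKR_def ls1_def ls2_def u_def by (intro mult_mono) auto
qed

end
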